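(* If a Möbius transformation of $\mathcal A_2^{(0,1)}\cup\{\infty\}$ fixes each of $-1,1,-e_1,e_1,0$ and $\infty$, then it is the identity transformation, i.e. its Vahlen matrices are $\pm I$.
   Context: $\mathcal A_2$ is the real associative algebra generated by $e_1,e_2$ with $e_1^2=e_2^2=-1$, $e_1e_2=-e_2e_1$; for $a=a_0+a_1e_1+a_2e_2+a_{12}e_1e_2$ put $a^*=a_0+a_1e_1+a_2e_2-a_{12}e_1e_2$. $\mathcal A_2^{(0,1)}=\mathbb R+\mathbb Re_1+\mathbb Re_2$. A Vahlen matrix is $\begin{pmatrix}a&b\\c&d\end{pmatrix}$ with $a,b,c,d\in\mathcal A_2$, $ad^*-bc^*=1$, $ab^*,cd^*\in\mathcal A_2^{(0,1)}$, acting by $x\mapsto(ax+b)(cx+d)^{-1}$, $\infty\mapsto ac^{-1}$; the Möbius transformations of $\mathcal A_2^{(0,1)}\cup\{\infty\}$ are exactly these maps, each given by exactly two Vahlen matrices $\pm A$. *)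

theory Defs
  imports Complex_Main
begin

text \<open>The Clifford algebra A_2: elements a0 + a1 e1 + a2 e2 + a12 e1e2,
  with e1^2 = e2^2 = -1 and e1 e2 = - e2 e1.\<close>

datatype A2 = A2 (cp0: real) (cp1: real) (cp2: real) (cp12: real)

definition a2_zero :: A2 where "a2_zero = A2 0 0 0 0"
definition a2_one :: A2 where "a2_one = A2 1 0 0 0"
definition a2_e1 :: A2 where "a2_e1 = A2 0 1 0 0"
definition a2_e2 :: A2 where "a2_e2 = A2 0 0 1 0"

definition a2_add :: "A2 \<Rightarrow> A2 \<Rightarrow> A2" where
  "a2_add a b = A2 (cp0 a + cp0 b) (cp1 a + cp1 b) (cp2 a + cp2 b) (cp12 a + cp12 b)"

definition a2_neg :: "A2 \<Rightarrow> A2" where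
  "a2_neg a = A2 (- cp0 a) (- cp1 a) (- cp2 a) (- cp12 a)"

definition a2_sub :: "A2 \<Rightarrow> A2 \<Rightarrow> A2" where
  "a2_sub a b = a2_add a (a2_neg b)"

text \<open>Product, determined by bilinearity and e1 e1 = e2 e2 = -1, e1 e2 = e12 = - e2 e1
  (hence e1 e12 = -e2, e12 e1 = e2, e2 e12 = e1, e12 e2 = -e1, e12 e12 = -1).\<close>
definition a2_mult :: "A2 \<Rightarrow> A2 \<Rightarrow> A2" where
  "a2_mult a b = A2
     (cp0 a * cp0 b - cp1 a * cp1 b - cp2 a * cp2 b - cp12 a * cp12 b)
     (cp0 a * cp1 b + cp1 a * cp0 b + cp2 a * cp12 b - cp12 a * cp2 b)
     (cp0 a * cp2 b - cp1 a * cp12 b + cp2 a * cp0 b + cp12 a * cp1 b)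
     (cp0 a * cp12 b + cp1 a * cp2 b - cp2 a * cp1 b + cp12 a * cp0 b)"

definition a2_star :: "A2 \<Rightarrow> A2" where
  "a2_star a = A2 (cp0 a) (cp1 a) (cp2 a) (- cp12 a)"

definition a2_inv :: "A2 \<Rightarrow> A2" where
  "a2_inv a = (let n = (cp0 a)\<^sup>2 + (cp1 a)\<^sup>2 + (cp2 a)\<^sup>2 + (cp12 a)\<^sup>2 in
     A2 (cp0 a / n) (- cp1 a / n) (- cp2 a / n) (- cp12 a / n))"

definition paravec :: "A2 \<Rightarrow> bool" where
  "paravec a \<longleftrightarrow> cp12 a = 0"

definition vahlen :: "A2 \<Rightarrow> A2 \<Rightarrow> A2 \<Rightarrow> A2 \<Rightarrow> bool" where
  "vahlen a b c d \<longleftrightarrow>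
     a2_sub (a2_mult a (a2_star d)) (a2_mult b (a2_star c)) = a2_one \<and>
     paravec (a2_mult a (a2_star b)) \<and> paravec (a2_mult c (a2_star d))"

datatype ext = Fin A2 | Infty

fun moebius :: "A2 \<Rightarrow> A2 \<Rightarrow> A2 \<Rightarrow> A2 \<Rightarrow> ext \<Rightarrow> ext" where
  "moebius a b c d (Fin x) =
     (let den = a2_add (a2_mult c x) d in
      if den = a2_zero then Infty
      else Fin (a2_mult (a2_add (a2_mult a x) b) (a2_inv den)))"
| "moebius a b c d Infty =
     (if c = a2_zero then Infty else Fin (a2_mult a (a2_inv c)))"

end

theory Submission
  imports Defs
begin

text \<open>Fixing \<open>\<infinity>\<close>, \<open>0\<close> and \<open>1\<close> forces \<open>c = b = 0\<close> and \<open>d = a\<close>, so the map is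
  \<open>x \<mapsto> a x a\<inverse>\<close>. Fixing \<open>e\<^sub>1\<close> then says that \<open>a\<close> commutes with \<open>e\<^sub>1\<close>, i.e. \<open>a \<in> \<real> + \<real>e\<^sub>1\<close>;
  in particular \<open>a\<^sup>* = a\<close>, so the Vahlen condition \<open>a d\<^sup>* - b c\<^sup>* = 1\<close> reads \<open>a\<^sup>2 = 1\<close>, and
  \<open>a = \<plusminus>1\<close> because \<open>\<A>\<^sub>2\<close> (the quaternions) has no zero divisors.\<close>

lemma a2_inverse: "a2_mult (a2_inv x) x = a2_one" "a2_mult x (a2_inv x) = a2_one"
  if "x \<noteq> a2_zero"
proof -
  obtain p q r s where x: "x = A2 p q r s" by (cases x)
  have "p\<^sup>2 + q\<^sup>2 + r\<^sup>2 + s\<^sup>2 \<noteq> 0" using that by (auto simp: x a2_zero_def add_nonneg_eq_0_iff)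
  then show "a2_mult (a2_inv x) x = a2_one" "a2_mult x (a2_inv x) = a2_one"
    by (simp_all add: x a2_mult_def a2_inv_def a2_one_def Let_def add_divide_distrib [symmetric]
        diff_divide_distrib [symmetric] power2_eq_square)
qed

instantiation A2 :: division_ring
begin

definition zero_A2_def: "0 = a2_zero"
definition one_A2_def: "1 = a2_one"
definition plus_A2_def: "(+) = a2_add"
definition uminus_A2_def: "uminus = a2_neg"
definition minus_A2_def: "(-) = a2_sub"
definition times_A2_def: "(*) = a2_mult"
definition inverse_A2_def: "inverse = a2_inv"
definition divide_A2_def: "x div (y :: A2) = x * inverse y"

instance
proof
  fix x y z :: A2
  show "x * y * z = x * (y * z)"
    by (simp add: times_A2_def a2_mult_def algebra_simps)
  show "x + y + z = x + (y + z)" "x + y = y + x"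
    by (simp_all add: plus_A2_def a2_add_def algebra_simps)
  show "0 + x = x" "- x + x = 0" "x - y = x + - y"
    by (simp_all add: zero_A2_def plus_A2_def uminus_A2_def minus_A2_def a2_zero_def a2_add_def
        a2_neg_def a2_sub_def)
  show "1 * x = x" "x * 1 = x"
    by (simp_all add: one_A2_def times_A2_def a2_one_def a2_mult_def)
  show "(x + y) * z = x * z + y * z" "x * (y + z) = x * y + x * z"
    by (simp_all add: plus_A2_def times_A2_def a2_add_def a2_mult_def algebra_simps)
  show "(0::A2) \<noteq> 1"
    by (simp add: zero_A2_def one_A2_def a2_zero_def a2_one_def)
  show "x div y = x * inverse y"
    by (rule divide_A2_def)
  show "inverse (0::A2) = 0"
    by (simp add: zero_A2_def inverse_A2_def a2_zero_def a2_inv_def)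
  assume "x \<noteq> 0"
  then show "inverse x * x = 1" "x * inverse x = 1"
    by (simp_all add: zero_A2_def one_A2_def times_A2_def inverse_A2_def a2_inverse)
qed

end

lemma A2_ring_ops:
  "a2_zero = 0" "a2_one = 1" "a2_add x y = x + y" "a2_neg x = - x" "a2_sub x y = x - y"
  "a2_mult x y = x * y" "a2_inv x = inverse x"
  by (simp_all add: zero_A2_def one_A2_def plus_A2_def uminus_A2_def minus_A2_def times_A2_def
      inverse_A2_def)

lemma A2_commute_e1_iff: "a * a2_e1 = a2_e1 * a \<longleftrightarrow> cp2 a = 0 \<and> cp12 a = 0"
  by (cases a) (auto simp: times_A2_def a2_mult_def a2_e1_def)

lemma a2_star_paravec: "paravec a \<Longrightarrow> a2_star a = a"
  by (cases a) (simp add: paravec_def a2_star_def)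

lemma moebius_Infty_eq_Infty_iff: "moebius a b c d Infty = Infty \<longleftrightarrow> c = 0"
  by (simp add: A2_ring_ops Let_def split: if_splits)

lemma moebius_affine:
  "moebius a b 0 d (Fin x) = (if d = 0 then Infty else Fin ((a * x + b) * inverse d))"
  by (simp add: A2_ring_ops Let_def split: if_splits)

lemma moebius_fixing_0_1_Infty:
  assumes "moebius a b c d Infty = Infty"
    and "moebius a b c d (Fin 0) = Fin 0"
    and "moebius a b c d (Fin 1) = Fin 1"
  shows "c = 0" "b = 0" "d = a" "a \<noteq> 0"
    and "moebius a b c d (Fin x) = Fin (a * x * inverse a)"
proof -
  show c: "c = 0"
    using assms(1) by (simp only: moebius_Infty_eq_Infty_iff)
  have d: "d \<noteq> 0" and "b * inverse d = 0"
    using assms(2) unfolding c moebius_affine by (simp_all split: if_splits)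
  then show b: "b = 0"
    by simp
  have "a * inverse d = 1"
    using assms(3) unfolding b c moebius_affine by (simp split: if_splits)
  with d show "d = a"
    by (metis divide_inverse right_inverse_eq)
  with d show "a \<noteq> 0" "moebius a b c d (Fin x) = Fin (a * x * inverse a)"
    unfolding b c moebius_affine by simp_all
qed

theorem proposition3p5:
  fixes a b c d :: A2
  assumes "vahlen a b c d"
    and "moebius a b c d (Fin (a2_neg a2_one)) = Fin (a2_neg a2_one)"
    and "moebius a b c d (Fin a2_one) = Fin a2_one"
    and "moebius a b c d (Fin (a2_neg a2_e1)) = Fin (a2_neg a2_e1)"
    and "moebius a b c d (Fin a2_e1) = Fin a2_e1"
    and "moebius a b c d (Fin a2_zero) = Fin a2_zero"
    and "moebius a b c d Infty = Infty"
  shows "(\<forall>x. paravec x \<longrightarrow> moebius a b c d (Fin x) = Fin x)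
    \<and> ((a, b, c, d) = (a2_one, a2_zero, a2_zero, a2_one)
       \<or> (a, b, c, d) = (a2_neg a2_one, a2_zero, a2_zero, a2_neg a2_one))"
proof -
  note conj = moebius_fixing_0_1_Infty[OF assms(7) assms(6,3)[unfolded A2_ring_ops]]
  have "a * a2_e1 = a * a2_e1 * inverse a * a"
    using conj(4) by (simp add: mult.assoc)
  also have "\<dots> = a2_e1 * a"
    using assms(5) by (simp only: conj(5) ext.inject)
  finally have "a * a2_e1 = a2_e1 * a" .
  then have "a2_star a = a"
    by (simp add: A2_commute_e1_iff a2_star_paravec paravec_def)
  then have "a * a = 1"
    using assms(1) by (simp add: vahlen_def conj A2_ring_ops)
  then have a: "a = 1 \<or> a = -1"
    by (simp add: square_eq_1_iff)
  then have "moebius a b c d (Fin x) = Fin x" for x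
    unfolding conj(5) by auto
  with a show ?thesis
    by (auto simp: conj A2_ring_ops)
qed

end
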